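(* For $n \ge 8$, let $\mu(n)$ be the minimum number of edges of a connected non-prime graph of order $n$. Then $\mu(n) \le n+1$ if $n$ is even, and $\mu(n) \le n+2$ if $n$ is odd.
   Context: Graphs are finite and simple. A prime labeling of a graph $G$ of order $n$ is a bijection $\alpha: V(G) \to \{1,2,\dots,n\}$ such that $\gcd(\alpha(u),\alpha(v)) = 1$ for every edge $uv \in E(G)$. $G$ is prime if it admits a prime labeling, and non-prime otherwise. *)

theory Defs
  imports Main
begin

definition simple_graph :: "'a set \<Rightarrow> 'a set set \<Rightarrow> bool" where
  "simple_graph V E \<longleftrightarrow> finite V \<and> (\<forall>e\<in>E. \<exists>u v. u \<in> V \<and> v \<in> V \<and> u \<noteq> v \<and> e = {u, v})"

definition adj :: "'a set set \<Rightarrow> 'a \<Rightarrow> 'a \<Rightarrow> bool" where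
  "adj E u v \<longleftrightarrow> {u, v} \<in> E"

definition connected_graph :: "'a set \<Rightarrow> 'a set set \<Rightarrow> bool" where
  "connected_graph V E \<longleftrightarrow> V \<noteq> {} \<and> (\<forall>u\<in>V. \<forall>v\<in>V. (adj E)\<^sup>*\<^sup>* u v)"

definition prime_labeling :: "'a set \<Rightarrow> 'a set set \<Rightarrow> ('a \<Rightarrow> nat) \<Rightarrow> bool" where
  "prime_labeling V E \<alpha> \<longleftrightarrow> bij_betw \<alpha> V {1..card V} \<and>
     (\<forall>u v. {u, v} \<in> E \<longrightarrow> gcd (\<alpha> u) (\<alpha> v) = 1)"

definition prime_graph :: "'a set \<Rightarrow> 'a set set \<Rightarrow> bool" where
  "prime_graph V E \<longleftrightarrow> (\<exists>\<alpha>. prime_labeling V E \<alpha>)"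

text \<open>Minimum number of edges of a connected non-prime graph of order n
  (vertices taken from nat; every finite graph is isomorphic to one such).\<close>
definition mu :: "nat \<Rightarrow> nat" where
  "mu n = (LEAST m. \<exists>(V::nat set) E. simple_graph V E \<and> card V = n \<and>
              connected_graph V E \<and> \<not> prime_graph V E \<and> card E = m)"

end

theory Submission
  imports Defs
begin

(* In a prime labeling the floor(n/2) vertices carrying even labels are pairwise
   non-adjacent, so a graph whose vertex set is covered by fewer than floor(n/2)
   cliques is not prime. Cut a path on n = 2p + 3t vertices into p consecutive
   pairs followed by t consecutive triples and close every triple to a triangle
   by one chord: the graph is connected, has n - 1 + t edges and is covered by
   p + t cliques, which is fewer than floor(n/2) once t >= 2. Take t = 2 for
   even n and t = 3 for odd n. *)

lemma card_even_atLeastAtMost: "card {k \<in> {1..n}. even k} = n div 2"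
proof -
  have "{k \<in> {1..n}. even k} = (\<lambda>i. 2 * i) ` {1..n div 2}"
    by (auto elim!: evenE)
  then show ?thesis
    by (simp add: card_image inj_on_def)
qed

lemma prime_graph_obtains_independent_set:
  assumes "prime_graph V E"
  obtains S where "S \<subseteq> V" "card S = card V div 2"
    "\<And>u v. u \<in> S \<Longrightarrow> v \<in> S \<Longrightarrow> {u, v} \<notin> E"
proof -
  obtain \<alpha> where bij: "bij_betw \<alpha> V {1..card V}"
    and coprime: "\<And>u v. {u, v} \<in> E \<Longrightarrow> gcd (\<alpha> u) (\<alpha> v) = 1"
    using assms unfolding prime_graph_def prime_labeling_def by blast
  define S where "S = {v \<in> V. even (\<alpha> v)}"
  have "bij_betw \<alpha> S {k \<in> {1..card V}. even k}"
    using bij unfolding S_def bij_betw_def by (auto intro: inj_on_subset)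
  then have "card S = card V div 2"
    using bij_betw_same_card card_even_atLeastAtMost by metis
  moreover have "{u, v} \<notin> E" if "u \<in> S" "v \<in> S" for u v
  proof -
    from that have "2 dvd gcd (\<alpha> u) (\<alpha> v)"
      unfolding S_def by simp
    then show ?thesis
      using coprime by fastforce
  qed
  ultimately show thesis
    using that[of S] unfolding S_def by blast
qed

lemma not_prime_graph_if_clique_cover:
  assumes "f ` V \<subseteq> K" "finite K" "card K < card V div 2"
    and clique: "\<And>u v. u \<in> V \<Longrightarrow> v \<in> V \<Longrightarrow> u \<noteq> v \<Longrightarrow> f u = f v \<Longrightarrow> {u, v} \<in> E"
  shows "\<not> prime_graph V E"
proof
  assume "prime_graph V E"
  then obtain S where S: "S \<subseteq> V" "card S = card V div 2"
    and independent: "\<And>u v. u \<in> S \<Longrightarrow> v \<in> S \<Longrightarrow> {u, v} \<notin> E"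
    by (rule prime_graph_obtains_independent_set) blast
  have "inj_on f S"
    using S(1) clique independent by (meson inj_onI subsetD)
  then have "card S \<le> card K"
    using assms(1,2) S(1) by (meson card_inj_on_le image_subset_iff subsetD)
  with S(2) assms(3) show False
    by simp
qed

lemma mu_le_card_edges:
  fixes V :: "nat set"
  assumes "simple_graph V E" "connected_graph V E" "\<not> prime_graph V E"
  shows "mu (card V) \<le> card E"
  unfolding mu_def by (rule Least_le) (use assms in blast)

definition path_edges :: "nat \<Rightarrow> nat set set" where
  "path_edges n = {{i, Suc i} | i. Suc i < n}"

lemma card_path_edges_le: "card (path_edges n) \<le> n - 1"
proof -
  have "path_edges n = (\<lambda>i. {i, Suc i}) ` {0..<n - 1}"
    unfolding path_edges_def by auto
  then show ?thesis
    using card_image_le[of "{0..<n - 1}" "\<lambda>i. {i, Suc i}"] by simp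
qed

lemma connected_graph_if_path_edges_subset:
  assumes "0 < n" "path_edges n \<subseteq> E"
  shows "connected_graph {0..<n} E"
proof -
  have from_0: "(adj E)\<^sup>*\<^sup>* 0 v" if "v < n" for v
    using that
  proof (induction v)
    case 0
    then show ?case by simp
  next
    case (Suc v)
    then have "adj E v (Suc v)"
      using assms(2) unfolding path_edges_def adj_def by blast
    with Suc show ?case
      by (simp add: rtranclp.rtrancl_into_rtrancl)
  qed
  have "symp (adj E)"
    by (rule sympI) (simp add: adj_def insert_commute)
  then have "(adj E)\<^sup>*\<^sup>* u v" if "u < n" "v < n" for u v
    using from_0 that by (meson rtranclp_trans symp_rtranclp sympD)
  with assms(1) show ?thesis
    unfolding connected_graph_def by auto
qed

definition pairs_triangles_edges :: "nat \<Rightarrow> nat \<Rightarrow> nat set set" where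
  "pairs_triangles_edges p t =
     path_edges (2*p + 3*t) \<union> {{2*p + 3*i, 2*p + 3*i + 2} | i. i < t}"

lemma simple_graph_pairs_triangles:
  "simple_graph {0..<2*p + 3*t} (pairs_triangles_edges p t)"
  unfolding simple_graph_def pairs_triangles_edges_def path_edges_def
proof (intro conjI ballI)
  fix e assume "e \<in> {{i, Suc i} |i. Suc i < 2*p + 3*t} \<union> {{2*p + 3*i, 2*p + 3*i + 2} |i. i < t}"
  then show "\<exists>u v. u \<in> {0..<2*p + 3*t} \<and> v \<in> {0..<2*p + 3*t} \<and> u \<noteq> v \<and> e = {u, v}"
  proof (elim UnE CollectE exE conjE)
    fix i assume "e = {i, Suc i}" "Suc i < 2*p + 3*t"
    then show ?thesis by (intro exI[of _ i] exI[of _ "Suc i"]) auto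
  next
    fix i assume "e = {2*p + 3*i, 2*p + 3*i + 2}" "i < t"
    then show ?thesis by (intro exI[of _ "2*p + 3*i"] exI[of _ "2*p + 3*i + 2"]) auto
  qed
qed simp

lemma card_pairs_triangles_edges_le:
  "card (pairs_triangles_edges p t) \<le> 2*p + 3*t - 1 + t"
proof -
  have "{{2*p + 3*i, 2*p + 3*i + 2} | i. i < t} = (\<lambda>i. {2*p + 3*i, 2*p + 3*i + 2}) ` {..<t}"
    by auto
  then have chords: "card {{2*p + 3*i, 2*p + 3*i + 2} | i. i < t} \<le> t"
    using card_image_le[of "{..<t}" "\<lambda>i. {2*p + 3*i, 2*p + 3*i + 2}"] by simp
  have "card (pairs_triangles_edges p t)
        \<le> card (path_edges (2*p + 3*t)) + card {{2*p + 3*i, 2*p + 3*i + 2} | i. i < t}"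
    unfolding pairs_triangles_edges_def by (rule card_Un_le)
  also have "\<dots> \<le> 2*p + 3*t - 1 + t"
    using card_path_edges_le chords by (rule add_mono)
  finally show ?thesis .
qed

definition block :: "nat \<Rightarrow> nat \<Rightarrow> nat" where
  "block p v = (if v < 2*p then v div 2 else p + (v - 2*p) div 3)"

lemma block_less: "v < 2*p + 3*t \<Longrightarrow> block p v < p + t"
  unfolding block_def by auto

lemma div_3_eq_less_cases:
  fixes x y :: nat
  assumes "x div 3 = y div 3" "x < y"
  shows "y = Suc x \<or> (y = x + 2 \<and> 3 dvd x)"
proof -
  define q where "q = x div 3"
  have "x = 3 * q + x mod 3"
    unfolding q_def by simp
  moreover have "y = 3 * q + y mod 3"
    unfolding q_def assms(1) by simp
  moreover have "y mod 3 < 3"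
    by simp
  ultimately show ?thesis
    using assms(2) by (auto simp: dvd_eq_mod_eq_0)
qed

lemma block_eq_cases:
  assumes "block p u = block p v" "u < v"
  shows "v = Suc u \<or> (v = u + 2 \<and> (\<exists>i. u = 2*p + 3*i))"
proof (cases "v < 2*p")
  case True
  with assms show ?thesis unfolding block_def by auto
next
  case False
  with assms have "2*p \<le> u"
    unfolding block_def by (auto split: if_splits)
  moreover from this assms False have "(u - 2*p) div 3 = (v - 2*p) div 3"
    unfolding block_def by simp
  moreover have "u - 2*p < v - 2*p"
    using \<open>2*p \<le> u\<close> assms(2) by simp
  ultimately have "v = Suc u \<or> (v = u + 2 \<and> 3 dvd u - 2*p)"
    using div_3_eq_less_cases[of "u - 2*p" "v - 2*p"] by auto
  moreover have "\<exists>i. u = 2*p + 3*i" if "3 dvd u - 2*p"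
    using that \<open>2*p \<le> u\<close> by (metis dvdE le_add_diff_inverse)
  ultimately show ?thesis
    by blast
qed

lemma block_eq_imp_edge:
  assumes "u < 2*p + 3*t" "v < 2*p + 3*t" "u < v" "block p u = block p v"
  shows "{u, v} \<in> pairs_triangles_edges p t"
  using block_eq_cases[OF assms(4,3)] assms(2)
  unfolding pairs_triangles_edges_def path_edges_def by auto

lemma not_prime_graph_pairs_triangles:
  assumes "2 \<le> t"
  shows "\<not> prime_graph {0..<2*p + 3*t} (pairs_triangles_edges p t)"
proof (rule not_prime_graph_if_clique_cover)
  show "block p ` {0..<2*p + 3*t} \<subseteq> {0..<p + t}"
    using block_less by auto
  show "card {0..<p + t} < card {0..<2*p + 3*t} div 2"
    using assms by simp
  fix u v assume "u \<in> {0..<2*p + 3*t}" "v \<in> {0..<2*p + 3*t}" "u \<noteq> v" "block p u = block p v"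
  then show "{u, v} \<in> pairs_triangles_edges p t"
    using block_eq_imp_edge[of u p t v] block_eq_imp_edge[of v p t u]
    by (cases "u < v") (auto simp: insert_commute)
qed simp

lemma mu_le_pairs_triangles:
  assumes "2 \<le> t"
  shows "mu (2*p + 3*t) \<le> 2*p + 3*t - 1 + t"
proof -
  have "connected_graph {0..<2*p + 3*t} (pairs_triangles_edges p t)"
    using assms by (intro connected_graph_if_path_edges_subset) (auto simp: pairs_triangles_edges_def)
  then have "mu (card {0..<2*p + 3*t}) \<le> card (pairs_triangles_edges p t)"
    by (rule mu_le_card_edges[OF simple_graph_pairs_triangles _ not_prime_graph_pairs_triangles[OF assms]])
  then show ?thesis
    using card_pairs_triangles_edges_le[of p t] by simp
qed

theorem theorem10p3:
  fixes n :: nat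
  assumes "n \<ge> 8"
  shows "(even n \<longrightarrow> mu n \<le> n + 1) \<and> (odd n \<longrightarrow> mu n \<le> n + 2)"
proof (intro conjI impI)
  assume "even n"
  then obtain k where "n = 2*k"
    by (rule evenE)
  with assms have "n = 2*(k - 3) + 3*2"
    by simp
  then show "mu n \<le> n + 1"
    using mu_le_pairs_triangles[of 2 "k - 3"] by simp
next
  assume "odd n"
  then obtain k where "n = 2*k + 1"
    by (rule oddE)
  with assms have "n = 2*(k - 4) + 3*3"
    by simp
  then show "mu n \<le> n + 2"
    using mu_le_pairs_triangles[of 3 "k - 4"] by simp
qed

end
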